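(* In the setting described in the context, $\frac{qAK^*-q^{-1}K^*A}{q-q^{-1}}=aI$, $\frac{qK^{*-1}B-q^{-1}BK^{*-1}}{q-q^{-1}}=bI$, $\frac{qA^*K^{*-1}-q^{-1}K^{*-1}A^*}{q-q^{-1}}=a^*I$, $\frac{qK^*B^*-q^{-1}B^*K^*}{q-q^{-1}}=b^*I$.
   Context: $\mathbb K$ is an algebraically closed field, $q\in\mathbb K$ nonzero and not a root of unity, $V$ a nonzero finite-dimensional $\mathbb K$-vector space. A tridiagonal pair on $V$ is an ordered pair $A,A^*$ of linear maps $V\to V$ such that: (i) each of $A,A^*$ is diagonalizable; (ii) there is an ordering $V_0,\dots,V_d$ of the eigenspaces of $A$ with $A^*V_i\subseteq V_{i-1}+V_i+V_{i+1}$ ($V_{-1}=V_{d+1}=0$); (iii) there is an ordering $V^*_0,\dots,V^*_\delta$ of the eigenspaces of $A^*$ with $AV^*_i\subseteq V^*_{i-1}+V^*_i+V^*_{i+1}$ ($V^*_{-1}=V^*_{\delta+1}=0$); (iv) no subspace $W\ne0,V$ satisfies $AW\subseteq W$, $A^*W\subseteq W$. It is known $d=\delta$; orderings as in (ii),(iii) are called standard. Setting: $A,A^*$ is a tridiagonal pair on $V$; $V_0,\dots,V_d$ (resp. $V^*_0,\dots,V^*_d$) is a standard ordering of the eigenspaces of $A$ (resp. $A^*$); the eigenvalue of $A$ on $V_i$ is $aq^{2i-d}$ and that of $A^*$ on $V^*_i$ is $a^*q^{d-2i}$ for some nonzero $a,a^*\in\mathbb K$; $b,b^*\in\mathbb K$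 are nonzero. For $0\le i\le d$, each of the following three families of subspaces forms a decomposition of $V$ (nonzero subspaces, direct sum equal to $V$): $(V^*_0+\cdots+V^*_i)\cap(V_0+\cdots+V_{d-i})$; $(V^*_{d-i}+\cdots+V^*_d)\cap(V_i+\cdots+V_d)$; $(V^*_{d-i}+\cdots+V^*_d)\cap(V_0+\cdots+V_{d-i})$. $B$ is the linear map acting as $bq^{2i-d}I$ on $(V^*_0+\cdots+V^*_i)\cap(V_0+\cdots+V_{d-i})$; $B^*$ acts as $b^*q^{d-2i}I$ on $(V^*_{d-i}+\cdots+V^*_d)\cap(V_i+\cdots+V_d)$; $K^*$ acts as $q^{2i-d}I$ on $(V^*_{d-i}+\cdots+V^*_d)\cap(V_0+\cdots+V_{d-i})$ (for each $0\le i\le d$). *)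

theory Defs
  imports Main "HOL-Computational_Algebra.Polynomial"
begin

definition alg_closed :: "'k::field itself \<Rightarrow> bool" where
  "alg_closed _ \<longleftrightarrow> (\<forall>p::'k poly. 0 < degree p \<longrightarrow> (\<exists>x. poly p x = 0))"

definition eigsp :: "('k::field \<Rightarrow> 'v::ab_group_add \<Rightarrow> 'v) \<Rightarrow> ('v \<Rightarrow> 'v) \<Rightarrow> 'k \<Rightarrow> 'v set" where
  "eigsp scale f th = {v. f v = scale th v}"

definition is_eigenvalue :: "('k::field \<Rightarrow> 'v::ab_group_add \<Rightarrow> 'v) \<Rightarrow> ('v \<Rightarrow> 'v) \<Rightarrow> 'k \<Rightarrow> bool" where
  "is_eigenvalue scale f th \<longleftrightarrow> (\<exists>v. v \<noteq> 0 \<and> f v = scale th v)"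

definition diagonalizable :: "('k::field \<Rightarrow> 'v::ab_group_add \<Rightarrow> 'v) \<Rightarrow> ('v \<Rightarrow> 'v) \<Rightarrow> bool" where
  "diagonalizable scale f \<longleftrightarrow> module.span scale (\<Union>th. eigsp scale f th) = UNIV"

definition ssum :: "('k::field \<Rightarrow> 'v::ab_group_add \<Rightarrow> 'v) \<Rightarrow> nat set \<Rightarrow> (nat \<Rightarrow> 'v set) \<Rightarrow> 'v set" where
  "ssum scale I W = module.span scale (\<Union>i\<in>I. W i)"

definition is_decomposition :: "('k::field \<Rightarrow> 'v::ab_group_add \<Rightarrow> 'v) \<Rightarrow> nat \<Rightarrow> (nat \<Rightarrow> 'v set) \<Rightarrow> bool" where
  "is_decomposition scale d W \<longleftrightarrow>
     (\<forall>i\<le>d. module.subspace scale (W i) \<and> W i \<noteq> {0}) \<and>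
     ssum scale {..d} W = UNIV \<and>
     (\<forall>w. (\<forall>i\<le>d. w i \<in> W i) \<and> (\<Sum>i\<le>d. w i) = 0 \<longrightarrow> (\<forall>i\<le>d. w i = 0))"

text \<open>Tridiagonal pair A, As on V (the whole type 'v) with standard orderings
  V i = eigsp A (th i), Vs i = eigsp As (ths i), i = 0..d.\<close>
definition tridiagonal_pair_std ::
  "('k::field \<Rightarrow> 'v::ab_group_add \<Rightarrow> 'v) \<Rightarrow> ('v \<Rightarrow> 'v) \<Rightarrow> ('v \<Rightarrow> 'v) \<Rightarrow> nat
     \<Rightarrow> (nat \<Rightarrow> 'k) \<Rightarrow> (nat \<Rightarrow> 'k) \<Rightarrow> bool" where
  "tridiagonal_pair_std scale A As d th ths \<longleftrightarrow>
     Vector_Spaces.linear scale scale A \<and> Vector_Spaces.linear scale scale As \<and>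
     diagonalizable scale A \<and> diagonalizable scale As \<and>
     inj_on th {..d} \<and> (\<forall>i\<le>d. is_eigenvalue scale A (th i)) \<and>
     (\<forall>t. is_eigenvalue scale A t \<longrightarrow> t \<in> th ` {..d}) \<and>
     inj_on ths {..d} \<and> (\<forall>i\<le>d. is_eigenvalue scale As (ths i)) \<and>
     (\<forall>t. is_eigenvalue scale As t \<longrightarrow> t \<in> ths ` {..d}) \<and>
     (\<forall>i\<le>d. As ` eigsp scale A (th i)
        \<subseteq> ssum scale ({i - 1..i + 1} \<inter> {..d}) (\<lambda>j. eigsp scale A (th j))) \<and>
     (\<forall>i\<le>d. A ` eigsp scale As (ths i)
        \<subseteq> ssum scale ({i - 1..i + 1} \<inter> {..d}) (\<lambda>j. eigsp scale As (ths j))) \<and>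
     (\<forall>W. module.subspace scale W \<and> A ` W \<subseteq> W \<and> As ` W \<subseteq> W \<longrightarrow> W = {0} \<or> W = UNIV)"

end

theory Submission
  imports Defs
begin

(*
  Each identity has the form  q X Y - q^-1 Y X = (q - q^-1) c,  where Y acts on the blocks of a
  decomposition of V by scalars k_i, and X acts on block i as t_i plus a part that Y scales by
  q^2 k_i, with t_i k_i = c; on each block both sides then agree. For X = A, Y = K* and for
  X = A*, Y = K*^-1 the blocks are those of K*, and the shift property is tridiagonality.
  Conversely, these two identities make K* triangular with respect to the eigenspaces of A and
  K*^-1 triangular with respect to those of A*. Irreducibility gives
  (V*_k + ... + V*_d) \<inter> (V_0 + ... + V_(k-1)) = 0, hence V_0 + ... + V_(d-i) = U_i + ... + U_d
  and V*_(d-i) + ... + V*_d = U_0 + ... + U_i for the blocks U_i of K*. Together these yield the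
  shift property of K*^-1 on the blocks of B and of K* on the blocks of B*.
*)

lemma ssum_eq_UNIV_if_is_decomposition: "is_decomposition scale d W \<Longrightarrow> ssum scale {..d} W = UNIV"
  by (simp add: is_decomposition_def)

context vector_space
begin

lemma linear_minus_scale:
  assumes "Vector_Spaces.linear scale scale f"
  shows "Vector_Spaces.linear scale scale (\<lambda>x. f x - c *s x)"
proof -
  interpret f: Vector_Spaces.linear scale scale f by fact
  show ?thesis
    by (simp add: Vector_Spaces.linear_iff vector_space_axioms f.add f.scale algebra_simps
        scale_left_commute)
qed

lemma subspace_eigsp:
  assumes "Vector_Spaces.linear scale scale f"
  shows "subspace (eigsp scale f c)"
proof -
  interpret f: Vector_Spaces.linear scale scale f by fact
  show ?thesis
    unfolding subspace_def eigsp_def by (auto simp: f.add f.scale algebra_simps scale_left_commute)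
qed

lemma subspace_ssum [iff]: "subspace (ssum scale I W)"
  unfolding ssum_def by simp

lemma ssum_mono: "I \<subseteq> J \<Longrightarrow> ssum scale I W \<subseteq> ssum scale J W"
  unfolding ssum_def by (intro span_mono) auto

lemma ssum_empty [simp]: "ssum scale {} W = {0}"
  unfolding ssum_def by simp

lemma mem_ssumI: "j \<in> I \<Longrightarrow> x \<in> W j \<Longrightarrow> x \<in> ssum scale I W"
  unfolding ssum_def by (intro span_base) auto

lemma ssum_least:
  "(\<And>j. j \<in> I \<Longrightarrow> W j \<subseteq> S) \<Longrightarrow> subspace S \<Longrightarrow> ssum scale I W \<subseteq> S"
  unfolding ssum_def by (intro span_minimal) auto

lemma ssum_Un: "ssum scale (I \<union> J) W = {y + z |y z. y \<in> ssum scale I W \<and> z \<in> ssum scale J W}"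
  unfolding ssum_def UN_Un by (rule span_Un)

lemma subspace_mem_if_diff_scale_mem:
  assumes "subspace S" "x - c *s y \<in> S" "y \<in> S"
  shows "x \<in> S"
proof -
  have "(x - c *s y) + c *s y \<in> S"
    using assms by (intro subspace_add subspace_scale)
  then show ?thesis by simp
qed

lemma linear_image_ssum_subset:
  assumes "Vector_Spaces.linear scale scale f" "\<And>j. j \<in> I \<Longrightarrow> f ` W j \<subseteq> S" "subspace S"
  shows "f ` ssum scale I W \<subseteq> S"
proof -
  interpret f: Vector_Spaces.linear scale scale f by fact
  have "f ` ssum scale I W = span (f ` (\<Union>j\<in>I. W j))"
    unfolding ssum_def f.span_image ..
  also have "\<dots> \<subseteq> S"
    using assms(2,3) by (intro span_minimal) auto
  finally show ?thesis .
qed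

lemma ssum_diagonal_shift:
  assumes "Vector_Spaces.linear scale scale f" "\<And>j x. j \<in> I \<Longrightarrow> x \<in> W j \<Longrightarrow> f x = \<kappa> j *s x"
    and "x \<in> ssum scale I W"
  shows "f x - \<kappa> i *s x \<in> ssum scale (I - {i}) W"
proof -
  have "(\<lambda>x. f x - \<kappa> i *s x) ` ssum scale I W \<subseteq> ssum scale (I - {i}) W"
  proof (rule linear_image_ssum_subset[OF linear_minus_scale[OF assms(1)] _ subspace_ssum])
    fix j assume j: "j \<in> I"
    have "f x - \<kappa> i *s x \<in> ssum scale (I - {i}) W" if x: "x \<in> W j" for x
    proof (cases "\<kappa> j = \<kappa> i")
      case True
      then show ?thesis using assms(2)[OF j x] by (simp add: subspace_0)
    next
      case False
      then have "x \<in> ssum scale (I - {i}) W" using j x by (intro mem_ssumI) auto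
      then have "(\<kappa> j - \<kappa> i) *s x \<in> ssum scale (I - {i}) W" by (simp add: subspace_scale)
      then show ?thesis using assms(2)[OF j x] by (simp add: scale_left_diff_distrib)
    qed
    then show "(\<lambda>x. f x - \<kappa> i *s x) ` W j \<subseteq> ssum scale (I - {i}) W" by blast
  qed
  then show ?thesis using assms(3) by blast
qed

lemma eigsp_inter_ssum_eigsp:
  assumes f: "Vector_Spaces.linear scale scale f" and "finite I" "\<mu> \<notin> \<kappa> ` I"
  shows "eigsp scale f \<mu> \<inter> ssum scale I (\<lambda>j. eigsp scale f (\<kappa> j)) = {0}"
  using assms(2,3)
proof (induction I rule: finite_induct)
  case empty
  then show ?case using subspace_eigsp[OF f] by (simp add: subspace_0)
next
  case (insert j I)
  have "v = 0" if v: "f v = \<mu> *s v" "v \<in> ssum scale (insert j I) (\<lambda>j. eigsp scale f (\<kappa> j))" for v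
  proof -
    have "f v - \<kappa> j *s v \<in> ssum scale (insert j I - {j}) (\<lambda>j. eigsp scale f (\<kappa> j))"
      by (rule ssum_diagonal_shift[OF f _ v(2)]) (simp add: eigsp_def)
    also have "\<dots> \<subseteq> ssum scale I (\<lambda>j. eigsp scale f (\<kappa> j))"
      by (rule ssum_mono) auto
    finally have "(\<mu> - \<kappa> j) *s v \<in> ssum scale I (\<lambda>j. eigsp scale f (\<kappa> j))"
      using v(1) by (simp add: scale_left_diff_distrib)
    moreover have "(\<mu> - \<kappa> j) *s v \<in> eigsp scale f \<mu>"
      using v(1) subspace_scale[OF subspace_eigsp[OF f]] by (simp add: eigsp_def)
    ultimately have "(\<mu> - \<kappa> j) *s v = 0"
      using insert.IH insert.prems by blast
    then show "v = 0" using insert.prems by simp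
  qed
  then show ?case
    using subspace_0[OF subspace_eigsp[OF f]] subspace_0[OF subspace_ssum] by (auto simp: eigsp_def)
qed

lemma q_commutator_on_eigenvector:
  assumes A: "Vector_Spaces.linear scale scale A" and K: "Vector_Spaces.linear scale scale K"
    and "q \<noteq> 0" "K u = \<kappa> *s u" "A u - \<theta> *s u \<in> eigsp scale K (q\<^sup>2 * \<kappa>)"
  shows "q *s A (K u) - inverse q *s K (A u) = ((q - inverse q) * (\<theta> * \<kappa>)) *s u"
proof -
  interpret A: Vector_Spaces.linear scale scale A by fact
  interpret K: Vector_Spaces.linear scale scale K by fact
  define w where "w = A u - \<theta> *s u"
  have Kw: "K w = (q\<^sup>2 * \<kappa>) *s w"
    using assms(5) unfolding w_def eigsp_def by simp
  have "A u = \<theta> *s u + w"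
    by (simp add: w_def)
  then have "q *s A (K u) - inverse q *s K (A u)
      = ((q - inverse q) * (\<theta> * \<kappa>)) *s u + (q * \<kappa> - inverse q * q\<^sup>2 * \<kappa>) *s w"
    by (simp add: assms(4) A.scale K.add K.scale Kw algebra_simps)
  also have "q * \<kappa> - inverse q * q\<^sup>2 * \<kappa> = 0"
    using \<open>q \<noteq> 0\<close> by (simp add: power2_eq_square)
  finally show ?thesis by simp
qed

lemma q_commutator_eq_scalar:
  assumes A: "Vector_Spaces.linear scale scale A" and K: "Vector_Spaces.linear scale scale K"
    and "q \<noteq> 0" and spans: "ssum scale I U = UNIV"
    and diag: "\<And>i u. i \<in> I \<Longrightarrow> u \<in> U i \<Longrightarrow> K u = \<kappa> i *s u"
    and raise: "\<And>i u. i \<in> I \<Longrightarrow> u \<in> U i \<Longrightarrow> A u - \<theta> i *s u \<in> eigsp scale K (q\<^sup>2 * \<kappa> i)"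
    and const: "\<And>i. i \<in> I \<Longrightarrow> \<theta> i * \<kappa> i = c"
  shows "q *s A (K v) - inverse q *s K (A v) = ((q - inverse q) * c) *s v"
proof -
  interpret A: Vector_Spaces.linear scale scale A by fact
  interpret K: Vector_Spaces.linear scale scale K by fact
  define D where "D v = q *s A (K v) - inverse q *s K (A v) - ((q - inverse q) * c) *s v" for v
  interpret D: Vector_Spaces.linear scale scale D
    unfolding D_def
    by (simp add: Vector_Spaces.linear_iff vector_space_axioms A.add A.scale K.add K.scale
        algebra_simps scale_left_commute)
  have "D v = 0"
  proof (rule D.eq_0_on_span)
    show "v \<in> span (\<Union>i\<in>I. U i)"
      using spans unfolding ssum_def by simp
  next
    fix u assume "u \<in> (\<Union>i\<in>I. U i)"
    then obtain i where "i \<in> I" "u \<in> U i" by blast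
    then show "D u = 0"
      using q_commutator_on_eigenvector[OF A K \<open>q \<noteq> 0\<close> diag raise] const unfolding D_def by simp
  qed
  then show ?thesis by (simp add: D_def)
qed

lemma q_commutator_eq_scalar_imp_eigsp:
  assumes A: "Vector_Spaces.linear scale scale A" and K: "Vector_Spaces.linear scale scale K"
    and "q \<noteq> 0" "\<theta> \<noteq> 0" "A v = \<theta> *s v"
    and comm: "q *s A (K v) - inverse q *s K (A v) = ((q - inverse q) * c) *s v"
  shows "K v - (c / \<theta>) *s v \<in> eigsp scale A (\<theta> / q\<^sup>2)"
proof -
  interpret A: Vector_Spaces.linear scale scale A by fact
  interpret K: Vector_Spaces.linear scale scale K by fact
  have "q *s A (K v) = (inverse q * \<theta>) *s K v + ((q - inverse q) * c) *s v"
    using comm by (simp add: assms(5) K.scale algebra_simps)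
  then have "A (K v) = inverse q *s ((inverse q * \<theta>) *s K v + ((q - inverse q) * c) *s v)"
    using \<open>q \<noteq> 0\<close> by (metis scale_one scale_scale left_inverse)
  also have "\<dots> = (\<theta> / q\<^sup>2) *s K v + ((1 - 1 / q\<^sup>2) * c) *s v"
    using \<open>q \<noteq> 0\<close> by (simp add: scale_right_distrib field_simps power2_eq_square)
  finally have AKv: "A (K v) = (\<theta> / q\<^sup>2) *s K v + ((1 - 1 / q\<^sup>2) * c) *s v" .
  have "A (K v - (c / \<theta>) *s v) = (\<theta> / q\<^sup>2) *s K v + ((1 - 1 / q\<^sup>2) * c - c) *s v"
    using \<open>\<theta> \<noteq> 0\<close> by (simp add: AKv A.diff A.scale assms(5) scale_left_diff_distrib)
  also have "\<dots> = (\<theta> / q\<^sup>2) *s (K v - (c / \<theta>) *s v)"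
    using \<open>\<theta> \<noteq> 0\<close> \<open>q \<noteq> 0\<close> by (simp add: scale_right_diff_distrib algebra_simps)
  finally show ?thesis
    unfolding eigsp_def by simp
qed

end

(* As, Bs, Ks, \<theta>s, Vs stand for A*, B*, K*, \<theta>*, V*. Of the three decompositions only
  spanning is assumed: injectivity of Ks comes from its eigenvalues being nonzero. *)

locale q_geometric_tridiagonal_pair = vector_space scale
  for scale :: "'k::field \<Rightarrow> 'v::ab_group_add \<Rightarrow> 'v" (infixr \<open>*s\<close> 75) +
  fixes A As B Bs Ks :: "'v \<Rightarrow> 'v"
    and d :: nat
    and q a as b bs :: 'k
  assumes q_nz: "q \<noteq> 0" and a_nz: "a \<noteq> 0" and as_nz: "as \<noteq> 0"
    and TD: "tridiagonal_pair_std scale A As d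
               (\<lambda>i. a * q powi (2 * int i - int d)) (\<lambda>i. as * q powi (int d - 2 * int i))"
    and W_spans: "ssum scale {..d} (\<lambda>i.
               ssum scale {..i} (\<lambda>j. eigsp scale As (as * q powi (int d - 2 * int j)))
             \<inter> ssum scale {..d - i} (\<lambda>j. eigsp scale A (a * q powi (2 * int j - int d)))) = UNIV"
    and X_spans: "ssum scale {..d} (\<lambda>i.
               ssum scale {d - i..d} (\<lambda>j. eigsp scale As (as * q powi (int d - 2 * int j)))
             \<inter> ssum scale {i..d} (\<lambda>j. eigsp scale A (a * q powi (2 * int j - int d)))) = UNIV"
    and U_spans: "ssum scale {..d} (\<lambda>i.
               ssum scale {d - i..d} (\<lambda>j. eigsp scale As (as * q powi (int d - 2 * int j)))
             \<inter> ssum scale {..d - i} (\<lambda>j. eigsp scale A (a * q powi (2 * int j - int d)))) = UNIV"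
    and B_linear: "Vector_Spaces.linear scale scale B"
    and B_on_W: "\<And>i v. i \<le> d \<Longrightarrow> v \<in>
               ssum scale {..i} (\<lambda>j. eigsp scale As (as * q powi (int d - 2 * int j)))
             \<inter> ssum scale {..d - i} (\<lambda>j. eigsp scale A (a * q powi (2 * int j - int d))) \<Longrightarrow>
               B v = (b * q powi (2 * int i - int d)) *s v"
    and Bs_linear: "Vector_Spaces.linear scale scale Bs"
    and Bs_on_X: "\<And>i v. i \<le> d \<Longrightarrow> v \<in>
               ssum scale {d - i..d} (\<lambda>j. eigsp scale As (as * q powi (int d - 2 * int j)))
             \<inter> ssum scale {i..d} (\<lambda>j. eigsp scale A (a * q powi (2 * int j - int d))) \<Longrightarrow>
               Bs v = (bs * q powi (int d - 2 * int i)) *s v"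
    and Ks_linear: "Vector_Spaces.linear scale scale Ks"
    and Ks_on_U: "\<And>i v. i \<le> d \<Longrightarrow> v \<in>
               ssum scale {d - i..d} (\<lambda>j. eigsp scale As (as * q powi (int d - 2 * int j)))
             \<inter> ssum scale {..d - i} (\<lambda>j. eigsp scale A (a * q powi (2 * int j - int d))) \<Longrightarrow>
               Ks v = q powi (2 * int i - int d) *s v"
begin

abbreviation \<theta> :: "nat \<Rightarrow> 'k" where "\<theta> j \<equiv> a * q powi (2 * int j - int d)"
abbreviation \<theta>s :: "nat \<Rightarrow> 'k" where "\<theta>s j \<equiv> as * q powi (int d - 2 * int j)"
abbreviation V :: "nat \<Rightarrow> 'v set" where "V j \<equiv> eigsp scale A (\<theta> j)"
abbreviation Vs :: "nat \<Rightarrow> 'v set" where "Vs j \<equiv> eigsp scale As (\<theta>s j)"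
abbreviation U :: "nat \<Rightarrow> 'v set" where "U i \<equiv> ssum scale {d - i..d} Vs \<inter> ssum scale {..d - i} V"
abbreviation W :: "nat \<Rightarrow> 'v set" where "W i \<equiv> ssum scale {..i} Vs \<inter> ssum scale {..d - i} V"
abbreviation X :: "nat \<Rightarrow> 'v set" where "X i \<equiv> ssum scale {d - i..d} Vs \<inter> ssum scale {i..d} V"

lemma A_linear: "Vector_Spaces.linear scale scale A"
  using TD by (simp add: tridiagonal_pair_std_def)

lemma As_linear: "Vector_Spaces.linear scale scale As"
  using TD by (simp add: tridiagonal_pair_std_def)

lemma inj_on_\<theta>: "inj_on \<theta> {..d}"
  using TD by (simp add: tridiagonal_pair_std_def)

lemma is_eigenvalue_\<theta>: "j \<le> d \<Longrightarrow> is_eigenvalue scale A (\<theta> j)"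
  using TD by (simp add: tridiagonal_pair_std_def)

lemma As_image_V: "j \<le> d \<Longrightarrow> As ` V j \<subseteq> ssum scale ({j - 1..j + 1} \<inter> {..d}) V"
  using TD by (simp add: tridiagonal_pair_std_def)

lemma A_image_Vs: "j \<le> d \<Longrightarrow> A ` Vs j \<subseteq> ssum scale ({j - 1..j + 1} \<inter> {..d}) Vs"
  using TD by (simp add: tridiagonal_pair_std_def)

lemma irreducible:
  assumes "subspace S" "A ` S \<subseteq> S" "As ` S \<subseteq> S"
  shows "S = {0} \<or> S = UNIV"
proof -
  have "\<forall>S. subspace S \<and> A ` S \<subseteq> S \<and> As ` S \<subseteq> S \<longrightarrow> S = {0} \<or> S = UNIV"
    using TD by (simp add: tridiagonal_pair_std_def)
  then show ?thesis using assms by blast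
qed

lemma q_powi_mult: "q powi m * q powi n = q powi (m + n)"
  using q_nz by (simp add: power_int_add)

lemma q_powi_add_2: "q powi (m + 2) = q\<^sup>2 * q powi m"
  using q_nz by (simp add: power_int_add mult.commute)

lemma A_image_Vs_tail: "A ` ssum scale {k..d} Vs \<subseteq> ssum scale {k - 1..d} Vs"
proof (rule linear_image_ssum_subset[OF A_linear _ subspace_ssum])
  fix j assume "j \<in> {k..d}"
  then have "A ` Vs j \<subseteq> ssum scale ({j - 1..j + 1} \<inter> {..d}) Vs" by (intro A_image_Vs) auto
  also have "\<dots> \<subseteq> ssum scale {k - 1..d} Vs" using \<open>j \<in> {k..d}\<close> by (intro ssum_mono) auto
  finally show "A ` Vs j \<subseteq> ssum scale {k - 1..d} Vs" .
qed

lemma As_image_V_head: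
  assumes "k \<le> d + 1"
  shows "As ` ssum scale {..<k} V \<subseteq> ssum scale {..k} V"
proof (rule linear_image_ssum_subset[OF As_linear _ subspace_ssum])
  fix j assume "j \<in> {..<k}"
  then have "As ` V j \<subseteq> ssum scale ({j - 1..j + 1} \<inter> {..d}) V" using assms by (intro As_image_V) auto
  also have "\<dots> \<subseteq> ssum scale {..k} V" using \<open>j \<in> {..<k}\<close> by (intro ssum_mono) auto
  finally show "As ` V j \<subseteq> ssum scale {..k} V" .
qed

lemma V_head_neq_UNIV: "ssum scale {..<d} V \<noteq> UNIV"
proof -
  obtain v where "v \<noteq> 0" "v \<in> V d"
    using is_eigenvalue_\<theta>[of d] unfolding is_eigenvalue_def eigsp_def by auto
  moreover have "\<theta> d \<notin> \<theta> ` {..<d}"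
  proof
    assume "\<theta> d \<in> \<theta> ` {..<d}"
    then obtain j where j: "j < d" "\<theta> d = \<theta> j" by blast
    then have "d = j" by (intro inj_onD[OF inj_on_\<theta>]) auto
    then show False using j by simp
  qed
  then have "V d \<inter> ssum scale {..<d} V = {0}"
    by (intro eigsp_inter_ssum_eigsp[OF A_linear]) auto
  ultimately show ?thesis by blast
qed

abbreviation Z :: "nat \<Rightarrow> 'v set" where "Z k \<equiv> ssum scale {k..d} Vs \<inter> ssum scale {..<k} V"

lemma A_shift_Z: "y \<in> Z k \<Longrightarrow> A y - \<theta> (k - 1) *s y \<in> Z (k - 1)"
proof
  assume y: "y \<in> Z k"
  have "A y \<in> ssum scale {k - 1..d} Vs" "y \<in> ssum scale {k - 1..d} Vs"
    using y A_image_Vs_tail ssum_mono[of "{k..d}" "{k - 1..d}"] by auto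
  then show "A y - \<theta> (k - 1) *s y \<in> ssum scale {k - 1..d} Vs"
    by (simp add: subspace_diff subspace_scale)
  have "A y - \<theta> (k - 1) *s y \<in> ssum scale ({..<k} - {k - 1}) V"
    using y by (intro ssum_diagonal_shift[OF A_linear]) (auto simp: eigsp_def)
  also have "\<dots> \<subseteq> ssum scale {..<k - 1} V" by (intro ssum_mono) auto
  finally show "A y - \<theta> (k - 1) *s y \<in> ssum scale {..<k - 1} V" .
qed

lemma As_shift_Z: "k \<le> d \<Longrightarrow> y \<in> Z k \<Longrightarrow> As y - \<theta>s k *s y \<in> Z (Suc k)"
proof
  assume k: "k \<le> d" and y: "y \<in> Z k"
  have "ssum scale {..<k} V \<subseteq> ssum scale {..<Suc k} V"
    by (rule ssum_mono) auto
  then have "As y \<in> ssum scale {..<Suc k} V" "y \<in> ssum scale {..<Suc k} V"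
    using k y As_image_V_head[of k] unfolding lessThan_Suc_atMost by auto
  then show "As y - \<theta>s k *s y \<in> ssum scale {..<Suc k} V"
    by (simp add: subspace_diff subspace_scale)
  have "As y - \<theta>s k *s y \<in> ssum scale ({k..d} - {k}) Vs"
    using y by (intro ssum_diagonal_shift[OF As_linear]) (auto simp: eigsp_def)
  also have "\<dots> \<subseteq> ssum scale {Suc k..d} Vs" by (intro ssum_mono) (auto simp: Suc_le_eq)
  finally show "As y - \<theta>s k *s y \<in> ssum scale {Suc k..d} Vs" .
qed

lemma A_image_ssum_Z: "A ` ssum scale UNIV Z \<subseteq> ssum scale UNIV Z"
proof (rule linear_image_ssum_subset[OF A_linear _ subspace_ssum])
  fix k
  show "A ` Z k \<subseteq> ssum scale UNIV Z"
  proof (rule image_subsetI)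
    fix y assume "y \<in> Z k"
    then show "A y \<in> ssum scale UNIV Z"
      using A_shift_Z by (blast intro: subspace_mem_if_diff_scale_mem[OF subspace_ssum] mem_ssumI)
  qed
qed

lemma As_image_ssum_Z: "As ` ssum scale UNIV Z \<subseteq> ssum scale UNIV Z"
proof (rule linear_image_ssum_subset[OF As_linear _ subspace_ssum])
  fix k
  show "As ` Z k \<subseteq> ssum scale UNIV Z"
  proof (rule image_subsetI)
    fix y assume y: "y \<in> Z k"
    show "As y \<in> ssum scale UNIV Z"
    proof (cases "k \<le> d")
      case True
      then show ?thesis
        using y As_shift_Z by (blast intro: subspace_mem_if_diff_scale_mem[OF subspace_ssum] mem_ssumI)
    next
      case False
      interpret As: Vector_Spaces.linear scale scale As by (fact As_linear)
      have "y = 0" using False y by simp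
      then show ?thesis by (simp add: subspace_0)
    qed
  qed
qed

(* The sum of all Z k is invariant under A and As but misses V d, so irreducibility forces it
  to vanish. *)

lemma Z_eq_0: "Z k = {0}"
proof -
  have "ssum scale UNIV Z \<subseteq> ssum scale {..<d} V"
  proof (rule ssum_least[OF _ subspace_ssum])
    fix k
    show "Z k \<subseteq> ssum scale {..<d} V"
    proof (cases "k \<le> d")
      case True
      then have "ssum scale {..<k} V \<subseteq> ssum scale {..<d} V" by (intro ssum_mono) auto
      then show ?thesis by blast
    next
      case False
      then have "Z k \<subseteq> {0}" by simp
      then show ?thesis using subspace_0[OF subspace_ssum] by blast
    qed
  qed
  then have "ssum scale UNIV Z = {0}"
    using irreducible[OF subspace_ssum A_image_ssum_Z As_image_ssum_Z] V_head_neq_UNIV by auto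
  then have "Z k \<subseteq> {0}"
    using mem_ssumI[of k UNIV _ Z] by blast
  moreover have "0 \<in> Z k"
    by (simp add: subspace_0)
  ultimately show ?thesis by blast
qed

lemma U_subspace: "subspace (U i)"
  by (simp add: subspace_inter)

lemma U_subset_eigsp_Ks: "i \<le> d \<Longrightarrow> U i \<subseteq> eigsp scale Ks (q powi (2 * int i - int d))"
  using Ks_on_U unfolding eigsp_def by blast

lemma inj_Ks: "inj Ks"
proof -
  interpret Ks: Vector_Spaces.linear scale scale Ks by (fact Ks_linear)
  let ?\<kappa> = "\<lambda>j. q powi (2 * int j - int d)"
  have "v = 0" if "Ks v = 0" for v
  proof -
    have "UNIV \<subseteq> ssum scale {..d} (\<lambda>j. eigsp scale Ks (?\<kappa> j))"
      unfolding U_spans[symmetric]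
      using U_subset_eigsp_Ks by (intro ssum_least subspace_ssum) (auto intro: mem_ssumI)
    moreover have "0 \<notin> ?\<kappa> ` {..d}"
      using q_nz by auto
    then have "eigsp scale Ks 0 \<inter> ssum scale {..d} (\<lambda>j. eigsp scale Ks (?\<kappa> j)) = {0}"
      by (intro eigsp_inter_ssum_eigsp[OF Ks_linear]) auto
    moreover have "v \<in> eigsp scale Ks 0"
      using that unfolding eigsp_def by simp
    ultimately show "v = 0" by blast
  qed
  then show ?thesis by (simp add: Ks.inj_iff_eq_0)
qed

lemma Ks_inverse_on_U:
  assumes "i \<le> d" "u \<in> U i"
  shows "Ks (q powi (int d - 2 * int i) *s u) = u"
proof -
  have "Ks (q powi (int d - 2 * int i) *s u)
      = (q powi (2 * int i - int d) * q powi (int d - 2 * int i)) *s u"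
    using Ks_on_U[OF assms(1)] subspace_scale[OF U_subspace assms(2)] by simp
  then show ?thesis by (simp add: q_powi_mult)
qed

lemma surj_Ks: "surj Ks"
proof -
  interpret Ks: Vector_Spaces.linear scale scale Ks by (fact Ks_linear)
  have "U i \<subseteq> range Ks" if "i \<le> d" for i
  proof
    fix u assume "u \<in> U i"
    show "u \<in> range Ks"
      using Ks_inverse_on_U[OF that \<open>u \<in> U i\<close>] by (rule range_eqI[OF sym])
  qed
  then have "ssum scale {..d} U \<subseteq> range Ks"
    by (intro ssum_least Ks.subspace_image subspace_UNIV) auto
  then show ?thesis using U_spans by auto
qed

lemma inv_Ks_on_U: "i \<le> d \<Longrightarrow> u \<in> U i \<Longrightarrow> inv Ks u = q powi (int d - 2 * int i) *s u"
  by (rule inv_f_eq[OF inj_Ks Ks_inverse_on_U])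

lemma inv_Ks_linear: "Vector_Spaces.linear scale scale (inv Ks)"
proof -
  interpret Ks: Vector_Spaces.linear scale scale Ks by (fact Ks_linear)
  have "inv Ks (x + y) = inv Ks x + inv Ks y" for x y
    by (rule inv_f_eq[OF inj_Ks]) (simp add: Ks.add surj_f_inv_f[OF surj_Ks])
  moreover have "inv Ks (c *s x) = c *s inv Ks x" for c x
    by (rule inv_f_eq[OF inj_Ks]) (simp add: Ks.scale surj_f_inv_f[OF surj_Ks])
  ultimately show ?thesis
    by (simp add: Vector_Spaces.linear_iff vector_space_axioms)
qed

lemma V_head_subset_U_tail:
  assumes "i \<le> d"
  shows "ssum scale {..d - i} V \<subseteq> ssum scale {i..d} U"
proof
  fix x assume x: "x \<in> ssum scale {..d - i} V"
  have "{..<i} \<union> {i..d} = {..d}" using assms by auto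
  then have "x \<in> ssum scale ({..<i} \<union> {i..d}) U" using U_spans by simp
  then obtain y z where yz: "x = y + z" "y \<in> ssum scale {..<i} U" "z \<in> ssum scale {i..d} U"
    unfolding ssum_Un by blast
  have "y \<in> ssum scale {Suc (d - i)..d} Vs"
  proof (rule subsetD[OF ssum_least[OF _ subspace_ssum] yz(2)])
    fix j assume "j \<in> {..<i}"
    then have "ssum scale {d - j..d} Vs \<subseteq> ssum scale {Suc (d - i)..d} Vs"
      using assms by (intro ssum_mono) auto
    then show "U j \<subseteq> ssum scale {Suc (d - i)..d} Vs" by blast
  qed
  moreover have "z \<in> ssum scale {..d - i} V"
  proof (rule subsetD[OF ssum_least[OF _ subspace_ssum] yz(3)])
    fix j assume "j \<in> {i..d}"
    then have "ssum scale {..d - j} V \<subseteq> ssum scale {..d - i} V"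
      by (intro ssum_mono) auto
    then show "U j \<subseteq> ssum scale {..d - i} V" by blast
  qed
  then have "x - z \<in> ssum scale {..d - i} V"
    using x by (simp add: subspace_diff)
  then have "y \<in> ssum scale {..<Suc (d - i)} V"
    using yz(1) unfolding lessThan_Suc_atMost by simp
  ultimately have "y = 0"
    using Z_eq_0[of "Suc (d - i)"] by blast
  then show "x \<in> ssum scale {i..d} U" using yz by simp
qed

lemma Vs_tail_subset_U_head:
  assumes "i \<le> d"
  shows "ssum scale {d - i..d} Vs \<subseteq> ssum scale {..i} U"
proof
  fix x assume x: "x \<in> ssum scale {d - i..d} Vs"
  have "{..i} \<union> {i<..d} = {..d}" using assms by auto
  then have "x \<in> ssum scale ({..i} \<union> {i<..d}) U" using U_spans by simp
  then obtain y z where yz: "x = y + z" "y \<in> ssum scale {..i} U" "z \<in> ssum scale {i<..d} U"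
    unfolding ssum_Un by blast
  have "z \<in> ssum scale {..<d - i} V"
  proof (rule subsetD[OF ssum_least[OF _ subspace_ssum] yz(3)])
    fix j assume "j \<in> {i<..d}"
    then have "ssum scale {..d - j} V \<subseteq> ssum scale {..<d - i} V"
      using assms by (intro ssum_mono) auto
    then show "U j \<subseteq> ssum scale {..<d - i} V" by blast
  qed
  moreover have "y \<in> ssum scale {d - i..d} Vs"
  proof (rule subsetD[OF ssum_least[OF _ subspace_ssum] yz(2)])
    fix j assume "j \<in> {..i}"
    then have "ssum scale {d - j..d} Vs \<subseteq> ssum scale {d - i..d} Vs"
      by (intro ssum_mono) auto
    then show "U j \<subseteq> ssum scale {d - i..d} Vs" by blast
  qed
  then have "x - y \<in> ssum scale {d - i..d} Vs"
    using x by (simp add: subspace_diff)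
  then have "z \<in> ssum scale {d - i..d} Vs"
    using yz(1) by simp
  ultimately have "z = 0"
    using Z_eq_0[of "d - i"] by blast
  then show "x \<in> ssum scale {..i} U" using yz by simp
qed

lemma A_raises_U:
  assumes "i \<le> d" "u \<in> U i"
  shows "A u - \<theta> (d - i) *s u \<in> eigsp scale Ks (q\<^sup>2 * q powi (2 * int i - int d))"
proof -
  have "A u - \<theta> (d - i) *s u \<in> ssum scale ({..d - i} - {d - i}) V"
    using assms(2) by (intro ssum_diagonal_shift[OF A_linear]) (auto simp: eigsp_def)
  also have "{..d - i} - {d - i} = {..<d - i}" by auto
  finally have V_part: "A u - \<theta> (d - i) *s u \<in> ssum scale {..<d - i} V" .
  have "ssum scale {d - i..d} Vs \<subseteq> ssum scale {d - (i + 1)..d} Vs"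
    by (intro ssum_mono) auto
  then have "A u \<in> ssum scale {d - (i + 1)..d} Vs" "u \<in> ssum scale {d - (i + 1)..d} Vs"
    using assms(2) A_image_Vs_tail[of "d - i"] by auto
  then have Vs_part: "A u - \<theta> (d - i) *s u \<in> ssum scale {d - (i + 1)..d} Vs"
    by (simp add: subspace_diff subspace_scale)
  show ?thesis
  proof (cases "i = d")
    case True
    then show ?thesis using V_part subspace_0[OF subspace_eigsp[OF Ks_linear]] by simp
  next
    case False
    then have "{..<d - i} = {..d - (i + 1)}" using assms(1) by auto
    then have "Ks (A u - \<theta> (d - i) *s u)
        = q powi (2 * int (i + 1) - int d) *s (A u - \<theta> (d - i) *s u)"
      using V_part Vs_part False assms(1) by (intro Ks_on_U) auto
    also have "2 * int (i + 1) - int d = (2 * int i - int d) + 2" by simp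
    finally show ?thesis unfolding eigsp_def q_powi_add_2 by simp
  qed
qed

lemma As_raises_U:
  assumes "i \<le> d" "u \<in> U i"
  shows "As u - \<theta>s (d - i) *s u \<in> eigsp scale (inv Ks) (q\<^sup>2 * q powi (int d - 2 * int i))"
proof -
  have "As u - \<theta>s (d - i) *s u \<in> ssum scale ({d - i..d} - {d - i}) Vs"
    using assms(2) by (intro ssum_diagonal_shift[OF As_linear]) (auto simp: eigsp_def)
  also have "{d - i..d} - {d - i} = {Suc (d - i)..d}" by auto
  finally have Vs_part: "As u - \<theta>s (d - i) *s u \<in> ssum scale {Suc (d - i)..d} Vs" .
  have "u \<in> ssum scale {..<Suc (d - i)} V"
    using assms(2) unfolding lessThan_Suc_atMost by blast
  then have "As u \<in> ssum scale {..Suc (d - i)} V"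
    using As_image_V_head[of "Suc (d - i)"] by auto
  moreover have "ssum scale {..d - i} V \<subseteq> ssum scale {..Suc (d - i)} V"
    by (intro ssum_mono) auto
  then have "u \<in> ssum scale {..Suc (d - i)} V"
    using assms(2) by auto
  ultimately have V_part: "As u - \<theta>s (d - i) *s u \<in> ssum scale {..Suc (d - i)} V"
    by (simp add: subspace_diff subspace_scale)
  show ?thesis
  proof (cases "i = 0")
    case True
    then show ?thesis
      using Vs_part subspace_0[OF subspace_eigsp[OF inv_Ks_linear]] by simp
  next
    case False
    then have "Suc (d - i) = d - (i - 1)" using assms(1) by auto
    then have "inv Ks (As u - \<theta>s (d - i) *s u)
        = q powi (int d - 2 * int (i - 1)) *s (As u - \<theta>s (d - i) *s u)"
      using V_part Vs_part assms(1) by (intro inv_Ks_on_U) auto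
    also have "int d - 2 * int (i - 1) = (int d - 2 * int i) + 2" using False by (simp add: of_nat_diff)
    finally show ?thesis unfolding eigsp_def q_powi_add_2 by simp
  qed
qed

lemma A_Ks_q_commutator: "q *s A (Ks v) - inverse q *s Ks (A v) = ((q - inverse q) * a) *s v"
proof (rule q_commutator_eq_scalar[OF A_linear Ks_linear q_nz U_spans])
  fix i u assume "i \<in> {..d}" "u \<in> U i"
  then show "Ks u = q powi (2 * int i - int d) *s u"
    and "A u - \<theta> (d - i) *s u \<in> eigsp scale Ks (q\<^sup>2 * q powi (2 * int i - int d))"
    by (intro Ks_on_U A_raises_U; simp)+
next
  fix i assume "i \<in> {..d}"
  then show "\<theta> (d - i) * q powi (2 * int i - int d) = a"
    by (simp add: mult.assoc q_powi_mult of_nat_diff)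
qed

lemma As_inv_Ks_q_commutator:
  "q *s As (inv Ks v) - inverse q *s inv Ks (As v) = ((q - inverse q) * as) *s v"
proof (rule q_commutator_eq_scalar[OF As_linear inv_Ks_linear q_nz U_spans])
  fix i u assume "i \<in> {..d}" "u \<in> U i"
  then show "inv Ks u = q powi (int d - 2 * int i) *s u"
    and "As u - \<theta>s (d - i) *s u \<in> eigsp scale (inv Ks) (q\<^sup>2 * q powi (int d - 2 * int i))"
    by (intro inv_Ks_on_U As_raises_U; simp)+
next
  fix i assume "i \<in> {..d}"
  then show "\<theta>s (d - i) * q powi (int d - 2 * int i) = as"
    by (simp add: mult.assoc q_powi_mult of_nat_diff)
qed

lemma Ks_image_V:
  assumes "1 \<le> j" "v \<in> V j"
  shows "Ks v - q powi (int d - 2 * int j) *s v \<in> V (j - 1)"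
proof -
  have "Ks v - (a / \<theta> j) *s v \<in> eigsp scale A (\<theta> j / q\<^sup>2)"
    using assms(2) a_nz q_nz
    by (intro q_commutator_eq_scalar_imp_eigsp[OF A_linear Ks_linear q_nz _ _ A_Ks_q_commutator])
      (auto simp: eigsp_def)
  moreover have "a / \<theta> j = q powi (int d - 2 * int j)"
  proof -
    have "a / \<theta> j = inverse (q powi (2 * int j - int d))"
      using a_nz by (simp add: nonzero_divide_mult_cancel_left inverse_eq_divide)
    also have "\<dots> = q powi (int d - 2 * int j)"
      by (subst power_int_minus[symmetric]) simp
    finally show ?thesis .
  qed
  moreover have "\<theta> j / q\<^sup>2 = \<theta> (j - 1)"
  proof -
    have "2 * int j - int d = (2 * int (j - 1) - int d) + 2"
      using assms(1) by (simp add: of_nat_diff)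
    then have "\<theta> j = q\<^sup>2 * \<theta> (j - 1)"
      by (simp only: q_powi_add_2 mult.left_commute)
    then show ?thesis using q_nz by (simp only:) simp
  qed
  ultimately show ?thesis by simp
qed

lemma Ks_image_V_tail:
  assumes "1 \<le> i"
  shows "Ks ` ssum scale {i..d} V \<subseteq> ssum scale {i - 1..d} V"
proof (rule linear_image_ssum_subset[OF Ks_linear _ subspace_ssum])
  fix j assume j: "j \<in> {i..d}"
  show "Ks ` V j \<subseteq> ssum scale {i - 1..d} V"
  proof (rule image_subsetI)
    fix v assume v: "v \<in> V j"
    have "Ks v - q powi (int d - 2 * int j) *s v \<in> ssum scale {i - 1..d} V"
      using Ks_image_V[OF _ v] assms j by (intro mem_ssumI[of "j - 1"]) auto
    moreover have "v \<in> ssum scale {i - 1..d} V"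
      using v j by (intro mem_ssumI[of j]) auto
    ultimately show "Ks v \<in> ssum scale {i - 1..d} V"
      by (rule subspace_mem_if_diff_scale_mem[OF subspace_ssum])
  qed
qed

lemma inv_Ks_image_Vs:
  assumes "v \<in> Vs j"
  shows "inv Ks v - q powi (2 * int j - int d) *s v \<in> Vs (j + 1)"
proof -
  have "inv Ks v - (as / \<theta>s j) *s v \<in> eigsp scale As (\<theta>s j / q\<^sup>2)"
    using assms as_nz q_nz
    by (intro q_commutator_eq_scalar_imp_eigsp[OF As_linear inv_Ks_linear q_nz _ _
          As_inv_Ks_q_commutator])
      (auto simp: eigsp_def)
  moreover have "as / \<theta>s j = q powi (2 * int j - int d)"
  proof -
    have "as / \<theta>s j = inverse (q powi (int d - 2 * int j))"
      using as_nz by (simp add: nonzero_divide_mult_cancel_left inverse_eq_divide)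
    also have "\<dots> = q powi (2 * int j - int d)"
      by (subst power_int_minus[symmetric]) simp
    finally show ?thesis .
  qed
  moreover have "\<theta>s j / q\<^sup>2 = \<theta>s (j + 1)"
  proof -
    have "int d - 2 * int j = (int d - 2 * int (j + 1)) + 2"
      by simp
    then have "\<theta>s j = q\<^sup>2 * \<theta>s (j + 1)"
      by (simp only: q_powi_add_2 mult.left_commute)
    then show ?thesis using q_nz by (simp only:) simp
  qed
  ultimately show ?thesis by simp
qed

lemma inv_Ks_image_Vs_head: "inv Ks ` ssum scale {..i} Vs \<subseteq> ssum scale {..i + 1} Vs"
proof (rule linear_image_ssum_subset[OF inv_Ks_linear _ subspace_ssum])
  fix j assume j: "j \<in> {..i}"
  show "inv Ks ` Vs j \<subseteq> ssum scale {..i + 1} Vs"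
  proof (rule image_subsetI)
    fix v assume v: "v \<in> Vs j"
    have "inv Ks v - q powi (2 * int j - int d) *s v \<in> ssum scale {..i + 1} Vs"
      using inv_Ks_image_Vs[OF v] j by (intro mem_ssumI[of "j + 1"]) auto
    moreover have "v \<in> ssum scale {..i + 1} Vs"
      using v j by (intro mem_ssumI[of j]) auto
    ultimately show "inv Ks v \<in> ssum scale {..i + 1} Vs"
      by (rule subspace_mem_if_diff_scale_mem[OF subspace_ssum])
  qed
qed

lemma inv_Ks_raises_W:
  assumes "i \<le> d" "w \<in> W i"
  shows "inv Ks w - q powi (int d - 2 * int i) *s w
    \<in> eigsp scale B (q\<^sup>2 * (b * q powi (2 * int i - int d)))"
proof -
  let ?z = "inv Ks w - q powi (int d - 2 * int i) *s w"
  have "ssum scale {..i} Vs \<subseteq> ssum scale {..i + 1} Vs"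
    by (intro ssum_mono) auto
  then have "inv Ks w \<in> ssum scale {..i + 1} Vs" "w \<in> ssum scale {..i + 1} Vs"
    using assms(2) inv_Ks_image_Vs_head[of i] by auto
  then have Vs_part: "?z \<in> ssum scale {..i + 1} Vs"
    by (simp add: subspace_diff subspace_scale)
  have "w \<in> ssum scale {i..d} U"
    using assms V_head_subset_U_tail by blast
  then have "?z \<in> ssum scale ({i..d} - {i}) U"
    by (intro ssum_diagonal_shift[OF inv_Ks_linear]) (auto simp: inv_Ks_on_U)
  also have "\<dots> \<subseteq> ssum scale {..<d - i} V"
  proof (rule ssum_least[OF _ subspace_ssum])
    fix j assume "j \<in> {i..d} - {i}"
    then have "ssum scale {..d - j} V \<subseteq> ssum scale {..<d - i} V"
      by (intro ssum_mono) auto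
    then show "U j \<subseteq> ssum scale {..<d - i} V" by blast
  qed
  finally have V_part: "?z \<in> ssum scale {..<d - i} V" .
  show ?thesis
  proof (cases "i = d")
    case True
    then show ?thesis using V_part subspace_0[OF subspace_eigsp[OF B_linear]] by simp
  next
    case False
    then have "{..<d - i} = {..d - (i + 1)}" using assms(1) by auto
    then have "B ?z = (b * q powi (2 * int (i + 1) - int d)) *s ?z"
      using V_part Vs_part False assms(1) by (intro B_on_W) auto
    also have "2 * int (i + 1) - int d = (2 * int i - int d) + 2" by simp
    finally show ?thesis unfolding eigsp_def q_powi_add_2 by (simp add: ac_simps)
  qed
qed

lemma Ks_raises_X:
  assumes "i \<le> d" "x \<in> X i"
  shows "Ks x - q powi (2 * int i - int d) *s x
    \<in> eigsp scale Bs (q\<^sup>2 * (bs * q powi (int d - 2 * int i)))"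
proof -
  let ?z = "Ks x - q powi (2 * int i - int d) *s x"
  have "x \<in> ssum scale {..i} U"
    using assms Vs_tail_subset_U_head by blast
  then have "?z \<in> ssum scale ({..i} - {i}) U"
    using assms(1) by (intro ssum_diagonal_shift[OF Ks_linear]) (auto simp: Ks_on_U)
  also have "\<dots> \<subseteq> ssum scale {Suc (d - i)..d} Vs"
  proof (rule ssum_least[OF _ subspace_ssum])
    fix j assume "j \<in> {..i} - {i}"
    then have "ssum scale {d - j..d} Vs \<subseteq> ssum scale {Suc (d - i)..d} Vs"
      using assms(1) by (intro ssum_mono) auto
    then show "U j \<subseteq> ssum scale {Suc (d - i)..d} Vs" by blast
  qed
  finally have Vs_part: "?z \<in> ssum scale {Suc (d - i)..d} Vs" .
  show ?thesis
  proof (cases "i = 0")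
    case True
    then show ?thesis using Vs_part subspace_0[OF subspace_eigsp[OF Bs_linear]] by simp
  next
    case False
    have "ssum scale {i..d} V \<subseteq> ssum scale {i - 1..d} V"
      by (intro ssum_mono) auto
    then have "Ks x \<in> ssum scale {i - 1..d} V" "x \<in> ssum scale {i - 1..d} V"
      using assms(2) Ks_image_V_tail[of i] False by auto
    then have V_part: "?z \<in> ssum scale {i - 1..d} V"
      by (simp add: subspace_diff subspace_scale)
    have "Suc (d - i) = d - (i - 1)" using False assms(1) by auto
    then have "Bs ?z = (bs * q powi (int d - 2 * int (i - 1))) *s ?z"
      using V_part Vs_part assms(1) by (intro Bs_on_X) auto
    also have "int d - 2 * int (i - 1) = (int d - 2 * int i) + 2" using False by (simp add: of_nat_diff)
    finally show ?thesis unfolding eigsp_def q_powi_add_2 by (simp add: ac_simps)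
  qed
qed

lemma inv_Ks_B_q_commutator:
  "q *s inv Ks (B v) - inverse q *s B (inv Ks v) = ((q - inverse q) * b) *s v"
proof (rule q_commutator_eq_scalar[OF inv_Ks_linear B_linear q_nz W_spans])
  fix i w assume "i \<in> {..d}" "w \<in> W i"
  then show "B w = (b * q powi (2 * int i - int d)) *s w"
    and "inv Ks w - q powi (int d - 2 * int i) *s w
      \<in> eigsp scale B (q\<^sup>2 * (b * q powi (2 * int i - int d)))"
    by (intro B_on_W inv_Ks_raises_W; simp)+
next
  fix i assume "i \<in> {..d}"
  then show "q powi (int d - 2 * int i) * (b * q powi (2 * int i - int d)) = b"
    by (simp add: mult.left_commute q_powi_mult)
qed

lemma Ks_Bs_q_commutator:
  "q *s Ks (Bs v) - inverse q *s Bs (Ks v) = ((q - inverse q) * bs) *s v"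
proof (rule q_commutator_eq_scalar[OF Ks_linear Bs_linear q_nz X_spans])
  fix i x assume "i \<in> {..d}" "x \<in> X i"
  then show "Bs x = (bs * q powi (int d - 2 * int i)) *s x"
    and "Ks x - q powi (2 * int i - int d) *s x
      \<in> eigsp scale Bs (q\<^sup>2 * (bs * q powi (int d - 2 * int i)))"
    by (intro Bs_on_X Ks_raises_X; simp)+
next
  fix i assume "i \<in> {..d}"
  then show "q powi (2 * int i - int d) * (bs * q powi (int d - 2 * int i)) = bs"
    by (simp add: mult.left_commute q_powi_mult)
qed

end

theorem theorem10p2:
  fixes scale :: "'k::field \<Rightarrow> 'v::ab_group_add \<Rightarrow> 'v"
    and A As B Bs Ks :: "'v \<Rightarrow> 'v"
    and d :: nat
    and q a as b bs :: 'k
  assumes vs: "vector_space scale"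
    and closed: "alg_closed TYPE('k)"
    and findim: "\<exists>S. finite S \<and> module.span scale S = UNIV"
    and nonzero: "\<exists>v::'v. v \<noteq> 0"
    and q_nz: "q \<noteq> 0"
    and q_not_root: "\<forall>n::nat. 0 < n \<longrightarrow> q ^ n \<noteq> 1"
    and a_nz: "a \<noteq> 0" and as_nz: "as \<noteq> 0" and b_nz: "b \<noteq> 0" and bs_nz: "bs \<noteq> 0"
    and TD: "tridiagonal_pair_std scale A As d
               (\<lambda>i. a * q powi (2 * int i - int d)) (\<lambda>i. as * q powi (int d - 2 * int i))"
    and dec1: "is_decomposition scale d (\<lambda>i.
               ssum scale {..i} (\<lambda>j. eigsp scale As (as * q powi (int d - 2 * int j)))
             \<inter> ssum scale {..d - i} (\<lambda>j. eigsp scale A (a * q powi (2 * int j - int d))))"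
    and dec2: "is_decomposition scale d (\<lambda>i.
               ssum scale {d - i..d} (\<lambda>j. eigsp scale As (as * q powi (int d - 2 * int j)))
             \<inter> ssum scale {i..d} (\<lambda>j. eigsp scale A (a * q powi (2 * int j - int d))))"
    and dec3: "is_decomposition scale d (\<lambda>i.
               ssum scale {d - i..d} (\<lambda>j. eigsp scale As (as * q powi (int d - 2 * int j)))
             \<inter> ssum scale {..d - i} (\<lambda>j. eigsp scale A (a * q powi (2 * int j - int d))))"
    and B_lin: "Vector_Spaces.linear scale scale B"
    and B_def: "\<forall>i\<le>d. \<forall>v \<in>
               ssum scale {..i} (\<lambda>j. eigsp scale As (as * q powi (int d - 2 * int j)))
             \<inter> ssum scale {..d - i} (\<lambda>j. eigsp scale A (a * q powi (2 * int j - int d))).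
               B v = scale (b * q powi (2 * int i - int d)) v"
    and Bs_lin: "Vector_Spaces.linear scale scale Bs"
    and Bs_def: "\<forall>i\<le>d. \<forall>v \<in>
               ssum scale {d - i..d} (\<lambda>j. eigsp scale As (as * q powi (int d - 2 * int j)))
             \<inter> ssum scale {i..d} (\<lambda>j. eigsp scale A (a * q powi (2 * int j - int d))).
               Bs v = scale (bs * q powi (int d - 2 * int i)) v"
    and Ks_lin: "Vector_Spaces.linear scale scale Ks"
    and Ks_def: "\<forall>i\<le>d. \<forall>v \<in>
               ssum scale {d - i..d} (\<lambda>j. eigsp scale As (as * q powi (int d - 2 * int j)))
             \<inter> ssum scale {..d - i} (\<lambda>j. eigsp scale A (a * q powi (2 * int j - int d))).
               Ks v = scale (q powi (2 * int i - int d)) v"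
  shows "(\<forall>v. scale (inverse (q - inverse q))
              (scale q (A (Ks v)) - scale (inverse q) (Ks (A v))) = scale a v)
       \<and> (\<forall>v. scale (inverse (q - inverse q))
              (scale q (inv Ks (B v)) - scale (inverse q) (B (inv Ks v))) = scale b v)
       \<and> (\<forall>v. scale (inverse (q - inverse q))
              (scale q (As (inv Ks v)) - scale (inverse q) (inv Ks (As v))) = scale as v)
       \<and> (\<forall>v. scale (inverse (q - inverse q))
              (scale q (Ks (Bs v)) - scale (inverse q) (Bs (Ks v))) = scale bs v)"
proof -
  interpret q_geometric_tridiagonal_pair scale A As B Bs Ks d q a as b bs
    by (rule q_geometric_tridiagonal_pair.intro[OF vs q_geometric_tridiagonal_pair_axioms.intro[OF
          q_nz a_nz as_nz TD
          ssum_eq_UNIV_if_is_decomposition[OF dec1] ssum_eq_UNIV_if_is_decomposition[OF dec2]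
          ssum_eq_UNIV_if_is_decomposition[OF dec3] B_lin B_def[rule_format] Bs_lin Bs_def[rule_format]
          Ks_lin Ks_def[rule_format]]])
  have "q - inverse q \<noteq> 0"
  proof
    assume "q - inverse q = 0"
    then have "q ^ 2 = 1"
      using q_nz by (simp add: power2_eq_square field_simps)
    then show False
      using q_not_root by auto
  qed
  then show ?thesis
    by (simp add: A_Ks_q_commutator inv_Ks_B_q_commutator As_inv_Ks_q_commutator
        Ks_Bs_q_commutator)
qed

end
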